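(* Let $X$ be a collectionwise normal, first countable, strongly homogeneous topological space with $\operatorname{ind} X=0$. Then $X$ is strongly discrete homogeneous.
   Context: A Hausdorff space is strongly homogeneous if all its nonempty clopen subspaces are homeomorphic to each other. A space $X$ is collectionwise normal if it is $T_1$ and for every discrete family $\{F_s\}_{s\in S}$ of closed subsets there is a discrete family $\{V_s\}_{s\in S}$ of open sets with $F_s\subseteq V_s$. $\operatorname{ind}$ is the small inductive dimension. A subset $D$ of $X$ is discrete if each point of $X$ has a neighbourhood containing at most one point of $D$. A Hausdorff space $X$ is strongly discrete homogeneous (sDH) if for any two discrete subsets $A,B$ and any bijection $f\colon A\to B$, $f$ extends to a homeomorphism of $X$ onto itself. *)

theory Defs
  imports "HOL-Analysis.Analysis"
begin

definition discrete_family :: "'a topology \<Rightarrow> 'i set \<Rightarrow> ('i \<Rightarrow> 'a set) \<Rightarrow> bool" where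
  "discrete_family X S F \<longleftrightarrow>
     (\<forall>x\<in>topspace X. \<exists>U. openin X U \<and> x \<in> U \<and>
        (\<forall>s\<in>S. \<forall>t\<in>S. F s \<inter> U \<noteq> {} \<and> F t \<inter> U \<noteq> {} \<longrightarrow> s = t))"

text \<open>Collectionwise normal (index sets range over sets of subsets of the space, which is
  enough to index any discrete family of closed sets).\<close>
definition collectionwise_normal :: "'a topology \<Rightarrow> bool" where
  "collectionwise_normal X \<longleftrightarrow> t1_space X \<and>
     (\<forall>(S :: 'a set set) (F :: 'a set \<Rightarrow> 'a set).
        (\<forall>s\<in>S. closedin X (F s)) \<and> discrete_family X S F \<longrightarrow>
        (\<exists>V. (\<forall>s\<in>S. openin X (V s) \<and> F s \<subseteq> V s) \<and> discrete_family X S V))"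

definition strongly_homogeneous :: "'a topology \<Rightarrow> bool" where
  "strongly_homogeneous X \<longleftrightarrow> Hausdorff_space X \<and>
     (\<forall>A B. openin X A \<and> closedin X A \<and> A \<noteq> {} \<and> openin X B \<and> closedin X B \<and> B \<noteq> {}
        \<longrightarrow> subtopology X A homeomorphic_space subtopology X B)"

text \<open>ind X = 0: X is nonempty and every point has arbitrarily small open neighbourhoods
  V with ind (boundary V) = -1, i.e. with empty boundary.\<close>
definition ind_zero :: "'a topology \<Rightarrow> bool" where
  "ind_zero X \<longleftrightarrow> topspace X \<noteq> {} \<and>
     (\<forall>x U. openin X U \<and> x \<in> U \<longrightarrow>
        (\<exists>V. openin X V \<and> x \<in> V \<and> V \<subseteq> U \<and> X frontier_of V = {}))"

definition discrete_subset :: "'a topology \<Rightarrow> 'a set \<Rightarrow> bool" where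
  "discrete_subset X D \<longleftrightarrow> D \<subseteq> topspace X \<and>
     (\<forall>x\<in>topspace X. \<exists>U. openin X U \<and> x \<in> U \<and>
        (\<forall>a\<in>D \<inter> U. \<forall>b\<in>D \<inter> U. a = b))"

definition strongly_discrete_homogeneous :: "'a topology \<Rightarrow> bool" where
  "strongly_discrete_homogeneous X \<longleftrightarrow> Hausdorff_space X \<and>
     (\<forall>A B f. discrete_subset X A \<and> discrete_subset X B \<and> bij_betw f A B \<longrightarrow>
        (\<exists>h. homeomorphic_map X X h \<and> (\<forall>a\<in>A. h a = f a)))"

end

theory Submission
  imports Defs
begin

(*
  A first countable space with ind X = 0 and no isolated points has, at every point p,
  a strictly decreasing clopen neighbourhood base C 0 \<supset> C 1 \<supset> ... with intersection {p}.
  Its shells C n - C (Suc n) are nonempty clopen sets, so strong homogeneity matches the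
  shells around p one by one with the shells around q; pasting these homeomorphisms and
  sending p to q gives a homeomorphism between clopen neighbourhoods of p and q taking p to q.

  Given discrete sets A, B and a bijection f, collectionwise normality separates the points of
  A \<union> B by a discrete family of open sets, which ind X = 0 shrinks to proper clopen
  neighbourhoods K x. The unions of the K a over A and of the K b over B are clopen with
  nonempty clopen complements; the complements are homeomorphic by strong homogeneity, and each
  K a is mapped onto K (f a) with a \<mapsto> f a. Pasting all of these extends f. A strongly
  homogeneous space with an isolated point is a single point, where the claim is trivial.
*)

subsection \<open>Gluing homeomorphisms\<close>

lemma homeomorphic_maps_pasting:
  assumes opS: "\<And>i. i \<in> I \<Longrightarrow> openin X (S i)" and opT: "\<And>i. i \<in> I \<Longrightarrow> openin Y (T i)"
    and djS: "disjoint_family_on S I" and djT: "disjoint_family_on T I"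
    and covS: "topspace X = (\<Union>i\<in>I. S i)" and covT: "topspace Y = (\<Union>i\<in>I. T i)"
    and hm: "\<And>i. i \<in> I \<Longrightarrow> homeomorphic_maps (subtopology X (S i)) (subtopology Y (T i)) (f i) (g i)"
  obtains f' g' where "homeomorphic_maps X Y f' g'"
    "\<And>i x. i \<in> I \<Longrightarrow> x \<in> S i \<Longrightarrow> f' x = f i x"
    "\<And>i y. i \<in> I \<Longrightarrow> y \<in> T i \<Longrightarrow> g' y = g i y"
proof -
  have fS: "f i \<in> S i \<rightarrow> T i" and gT: "g i \<in> T i \<rightarrow> S i"
    and gf: "\<And>x. x \<in> S i \<Longrightarrow> g i (f i x) = x" and fg: "\<And>y. y \<in> T i \<Longrightarrow> f i (g i y) = y"
    if "i \<in> I" for i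
    using hm[OF that] opS[OF that] opT[OF that]
    by (auto simp: homeomorphic_maps_def continuous_map_def dest!: openin_subset)
  have contS: "continuous_map (subtopology X (S i)) Y (f i)"
    and contT: "continuous_map (subtopology Y (T i)) X (g i)" if "i \<in> I" for i
    using hm[OF that] by (simp_all add: homeomorphic_maps_def continuous_map_in_subtopology)
  have compatS: "f i x = f j x" if "i \<in> I" "j \<in> I" "x \<in> topspace X \<inter> S i \<inter> S j" for i j x
    using that djS by (cases "i = j") (auto dest: disjoint_family_onD)
  have compatT: "g i y = g j y" if "i \<in> I" "j \<in> I" "y \<in> topspace Y \<inter> T i \<inter> T j" for i j y
    using that djT by (cases "i = j") (auto dest: disjoint_family_onD)
  obtain f' where f': "continuous_map X Y f'" "\<And>x i. i \<in> I \<Longrightarrow> x \<in> topspace X \<inter> S i \<Longrightarrow> f' x = f i x"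
    by (rule pasting_lemma_exists[OF _ opS contS compatS]) (auto simp: covS)
  obtain g' where g': "continuous_map Y X g'" "\<And>y i. i \<in> I \<Longrightarrow> y \<in> topspace Y \<inter> T i \<Longrightarrow> g' y = g i y"
    by (rule pasting_lemma_exists[OF _ opT contT compatT]) (auto simp: covT)
  have f'_eq: "f' x = f i x" if "i \<in> I" "x \<in> S i" for i x
    using f'(2) that covS by blast
  have g'_eq: "g' y = g i y" if "i \<in> I" "y \<in> T i" for i y
    using g'(2) that covT by blast
  show thesis
  proof
    show "homeomorphic_maps X Y f' g'"
      unfolding homeomorphic_maps_def
    proof (intro conjI f'(1) g'(1) ballI)
      fix x assume "x \<in> topspace X"
      then obtain i where "i \<in> I" "x \<in> S i" using covS by auto
      then show "g' (f' x) = x"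
        using f'_eq g'_eq fS gf by fastforce
    next
      fix y assume "y \<in> topspace Y"
      then obtain i where "i \<in> I" "y \<in> T i" using covT by auto
      then show "f' (g' y) = y"
        using f'_eq g'_eq gT fg by fastforce
    qed
  qed (use f'_eq g'_eq in auto)
qed

lemma continuous_map_extend_point:
  assumes g: "continuous_map (subtopology X (S - {p})) Y g"
    and S: "openin X S" "closedin X {p}" "p \<in> S" and q: "q \<in> topspace Y"
    and lim: "\<And>V. openin Y V \<Longrightarrow> q \<in> V \<Longrightarrow> \<exists>U. openin X U \<and> p \<in> U \<and> g ` (S \<inter> U - {p}) \<subseteq> V"
  shows "continuous_map (subtopology X S) Y (\<lambda>x. if x = p then q else g x)"
  unfolding continuous_map_openin_preimage_eq
proof (intro conjI allI impI)
  have Sp: "openin X (S - {p})" and SX: "S \<subseteq> topspace X"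
    using S by (simp_all add: openin_diff openin_subset)
  show "(\<lambda>x. if x = p then q else g x) \<in> topspace (subtopology X S) \<rightarrow> topspace Y"
    using g q SX by (auto simp: continuous_map_def)
  fix V assume V: "openin Y V"
  define G where "G = topspace X \<inter> (S - {p}) \<inter> g -` V"
  have "openin (subtopology X (S - {p})) G"
    using g V SX unfolding continuous_map_openin_preimage_eq G_def by simp
  then have G: "openin X G" using Sp openin_trans_full by blast
  have "openin X (topspace X \<inter> S \<inter> (\<lambda>x. if x = p then q else g x) -` V)"
  proof (cases "q \<in> V")
    case True
    then obtain U where U: "openin X U" "p \<in> U" "g ` (S \<inter> U - {p}) \<subseteq> V" using lim V by blast
    have "topspace X \<inter> S \<inter> (\<lambda>x. if x = p then q else g x) -` V = G \<union> (S \<inter> U)"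
      using SX U True by (auto simp: G_def image_subset_iff split: if_splits)
    then show ?thesis using G U S by auto
  next
    case False
    have "topspace X \<inter> S \<inter> (\<lambda>x. if x = p then q else g x) -` V = G"
      using SX False by (auto simp: G_def split: if_splits)
    then show ?thesis using G by simp
  qed
  then show "openin (subtopology X S)
      (topspace (subtopology X S) \<inter> (\<lambda>x. if x = p then q else g x) -` V)"
    using S by (auto simp: openin_open_subtopology Int_assoc)
qed

lemma homeomorphic_maps_extend_point:
  assumes hm: "homeomorphic_maps (subtopology X (S - {p})) (subtopology Y (T - {q})) g g'"
    and S: "openin X S" "closedin X {p}" "p \<in> S" and T: "openin Y T" "closedin Y {q}" "q \<in> T"
    and lim: "\<And>V. openin Y V \<Longrightarrow> q \<in> V \<Longrightarrow> \<exists>U. openin X U \<and> p \<in> U \<and> g ` (S \<inter> U - {p}) \<subseteq> V"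
    and lim': "\<And>U. openin X U \<Longrightarrow> p \<in> U \<Longrightarrow> \<exists>V. openin Y V \<and> q \<in> V \<and> g' ` (T \<inter> V - {q}) \<subseteq> U"
  shows "homeomorphic_maps (subtopology X S) (subtopology Y T)
           (\<lambda>x. if x = p then q else g x) (\<lambda>y. if y = q then p else g' y)"
proof -
  have SX: "S \<subseteq> topspace X" and TY: "T \<subseteq> topspace Y"
    using S T by (simp_all add: openin_subset)
  have g: "continuous_map (subtopology X (S - {p})) Y g" "g \<in> S - {p} \<rightarrow> T - {q}"
    and g': "continuous_map (subtopology Y (T - {q})) X g'" "g' \<in> T - {q} \<rightarrow> S - {p}"
    and g'g: "\<And>x. x \<in> S - {p} \<Longrightarrow> g' (g x) = x" and gg': "\<And>y. y \<in> T - {q} \<Longrightarrow> g (g' y) = y"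
    using hm SX TY
    by (auto simp: homeomorphic_maps_def continuous_map_in_subtopology Int_absorb1 Diff_subset
        dest: continuous_map_image_subset_topspace)
  show ?thesis
    unfolding homeomorphic_maps_def continuous_map_in_subtopology
  proof (intro conjI ballI)
    show "continuous_map (subtopology X S) Y (\<lambda>x. if x = p then q else g x)"
      using continuous_map_extend_point[OF g(1) S] T(3) TY lim by blast
    show "continuous_map (subtopology Y T) X (\<lambda>y. if y = q then p else g' y)"
      using continuous_map_extend_point[OF g'(1) T] S(3) SX lim' by blast
  qed (use g g' g'g gg' S T SX TY in auto)
qed

subsection \<open>Shells of decreasing sequences\<close>

text \<open>The \<open>n\<close>-th shell of a decreasing sequence \<open>C\<close> is \<open>C n - C (Suc n)\<close>.\<close>

lemma decseq_shell_index_le: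
  assumes "decseq C" "x \<in> C m - C (Suc m)" "x \<in> C n"
  shows "n \<le> m"
proof (rule ccontr)
  assume "\<not> n \<le> m"
  then have "C n \<subseteq> C (Suc m)" using \<open>decseq C\<close> by (simp add: decseqD)
  then show False using assms by blast
qed

lemma decseq_shells_disjoint:
  assumes "decseq C"
  shows "disjoint_family (\<lambda>n. C n - C (Suc n))"
  unfolding disjoint_family_on_def
proof (intro ballI impI)
  fix m n :: nat assume "m \<noteq> n"
  then show "(C m - C (Suc m)) \<inter> (C n - C (Suc n)) = {}"
    using decseq_shell_index_le[OF assms, of _ m n] decseq_shell_index_le[OF assms, of _ n m]
    by force
qed

lemma decseq_shell_exists:
  assumes "decseq C" "x \<in> C n" "x \<notin> C k"
  shows "\<exists>m\<ge>n. x \<in> C m - C (Suc m)"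
  using assms(3)
proof (induction k)
  case 0
  then show ?case using assms(1,2) by (auto dest: decseqD[of C 0 n])
next
  case (Suc k)
  show ?case
  proof (cases "x \<in> C k")
    case True
    have "\<not> Suc k \<le> n"
      using Suc.prems assms(2) decseqD[OF assms(1), of "Suc k" n] by blast
    then have "n \<le> k" by simp
    then show ?thesis using True Suc.prems by blast
  qed (use Suc.IH in blast)
qed

lemma decseq_shells_Union:
  assumes "decseq A" "(\<Inter>n. A n) = {a}"
  shows "(\<Union>n. A n - A (Suc n)) = A 0 - {a}"
proof
  show "(\<Union>n. A n - A (Suc n)) \<subseteq> A 0 - {a}"
    using assms decseqD[OF assms(1), of 0] by blast
  show "A 0 - {a} \<subseteq> (\<Union>n. A n - A (Suc n))"
  proof
    fix x assume x: "x \<in> A 0 - {a}"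
    then obtain k where "x \<notin> A k" using assms(2) by blast
    then show "x \<in> (\<Union>n. A n - A (Suc n))"
      using decseq_shell_exists[OF assms(1)] x by blast
  qed
qed

lemma decseq_shell_preserving_image:
  assumes "decseq C" "decseq D" "\<And>m x. x \<in> C m - C (Suc m) \<Longrightarrow> f x \<in> D m"
    and "(\<Inter>k. C k) = {a}"
  shows "f ` (C n - {a}) \<subseteq> D n"
proof (rule image_subsetI)
  fix x assume x: "x \<in> C n - {a}"
  then obtain k where "x \<notin> C k" using assms(4) by blast
  then obtain m where "m \<ge> n" "x \<in> C m - C (Suc m)"
    using decseq_shell_exists[OF assms(1)] x by blast
  then show "f x \<in> D n" using assms(2,3) by (auto dest: decseqD)
qed

subsection \<open>First countable zero-dimensional spaces\<close>

lemma ind_zero_clopen_nbhd: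
  assumes "ind_zero X" "openin X U" "x \<in> U"
  obtains V where "openin X V" "closedin X V" "x \<in> V" "V \<subseteq> U"
proof -
  obtain V where V: "openin X V" "x \<in> V" "V \<subseteq> U" "X frontier_of V = {}"
    using assms unfolding ind_zero_def by blast
  then have "closedin X V" by (simp add: frontier_of_eq_empty openin_subset)
  with V show thesis using that by blast
qed

lemma ind_zero_proper_clopen_nbhd:
  assumes "ind_zero X" "t1_space X" "x \<in> X derived_set_of topspace X" "openin X U" "x \<in> U"
  obtains V where "openin X V" "closedin X V" "x \<in> V" "V \<subset> U"
proof -
  obtain y where y: "y \<in> U" "y \<noteq> x"
    using assms(3-5) by (auto simp: in_derived_set_of)
  have "openin X (U - {y})" "x \<in> U - {y}"
    using assms(2,4,5) y(2) by (simp_all add: t1_space_openin_delete_alt)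
  then obtain V where "openin X V" "closedin X V" "x \<in> V" "V \<subseteq> U - {y}"
    by (rule ind_zero_clopen_nbhd[OF assms(1)])
  with y show thesis using that by blast
qed

lemma t1_space_Inter_local_base:
  assumes "t1_space X" "p \<in> topspace X" "\<And>n. p \<in> B n"
    and "\<And>U. openin X U \<Longrightarrow> p \<in> U \<Longrightarrow> \<exists>n. B n \<subseteq> U"
  shows "(\<Inter>n. B n) = {p}"
proof -
  have "\<exists>n. x \<notin> B n" if "x \<noteq> p" for x
  proof -
    have "openin X (topspace X - {x})" "p \<in> topspace X - {x}"
      using assms(1,2) that by (auto simp: t1_space_openin_delete_alt)
    then show ?thesis using assms(4) by blast
  qed
  then show ?thesis using assms(3) by blast
qed

lemma clopen_strictly_decreasing_local_base:
  assumes "first_countable X" "ind_zero X" "t1_space X" "p \<in> X derived_set_of topspace X"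
    and C: "openin X C" "closedin X C" "p \<in> C"
  obtains B where "B 0 = C" "\<And>n. openin X (B n)" "\<And>n. closedin X (B n)" "\<And>n. p \<in> B n"
    "\<And>n. B (Suc n) \<subset> B n" "\<And>U. openin X U \<Longrightarrow> p \<in> U \<Longrightarrow> \<exists>n. B n \<subseteq> U"
    "(\<Inter>n. B n) = {p}"
proof -
  have "p \<in> topspace X" using C openin_subset by blast
  then obtain \<B> where \<B>: "countable \<B>" "\<And>V. V \<in> \<B> \<Longrightarrow> openin X V"
    "\<And>U. openin X U \<Longrightarrow> p \<in> U \<Longrightarrow> \<exists>V\<in>\<B>. p \<in> V \<and> V \<subseteq> U"
    using assms(1) unfolding first_countable_def by meson
  have "\<B> \<noteq> {}" using \<B>(3)[OF openin_topspace \<open>p \<in> topspace X\<close>] by blast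
  define b where "b = from_nat_into \<B>"
  have b: "openin X (b n)" for n
    using \<B>(2) from_nat_into[OF \<open>\<B> \<noteq> {}\<close>] by (simp add: b_def)
  have b_onto: "range b = \<B>" using range_from_nat_into[OF \<open>\<B> \<noteq> {}\<close> \<B>(1)] by (simp add: b_def)
  define clopen_at where "clopen_at K \<longleftrightarrow> openin X K \<and> closedin X K \<and> p \<in> K" for K
  \<comment> \<open>step \<open>n\<close> shrinks properly (\<open>p\<close> is not isolated) and into the basic set \<open>b n\<close>\<close>
  have "\<exists>B. \<forall>n::nat. (clopen_at (B n) \<and> (n = 0 \<longrightarrow> B n = C)) \<and>
      B (Suc n) \<subset> B n \<and> (p \<in> b n \<longrightarrow> B (Suc n) \<subseteq> b n)"
  proof (rule dependent_nat_choice)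
    show "\<exists>K. clopen_at K \<and> ((0::nat) = 0 \<longrightarrow> K = C)" using C by (simp add: clopen_at_def)
  next
    fix K and n :: nat assume "clopen_at K \<and> (n = 0 \<longrightarrow> K = C)"
    then have "openin X (if p \<in> b n then K \<inter> b n else K)" "p \<in> (if p \<in> b n then K \<inter> b n else K)"
      using b[of n] by (auto simp: clopen_at_def)
    then obtain K' where K': "openin X K'" "closedin X K'" "p \<in> K'"
        "K' \<subset> (if p \<in> b n then K \<inter> b n else K)"
      by (rule ind_zero_proper_clopen_nbhd[OF assms(2-4)])
    show "\<exists>K'. (clopen_at K' \<and> (Suc n = 0 \<longrightarrow> K' = C)) \<and> K' \<subset> K \<and> (p \<in> b n \<longrightarrow> K' \<subseteq> b n)"
    proof (intro exI conjI impI)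
      show "clopen_at K'" using K'(1-3) by (simp add: clopen_at_def)
      show "K' \<subset> K" "p \<in> b n \<Longrightarrow> K' \<subseteq> b n" using K'(4) by (auto split: if_split_asm)
    qed simp
  qed
  then obtain B where B: "\<And>n. clopen_at (B n) \<and> (n = 0 \<longrightarrow> B n = C)" "\<And>n. B (Suc n) \<subset> B n"
    "\<And>n. p \<in> b n \<Longrightarrow> B (Suc n) \<subseteq> b n"
    by meson
  show thesis
  proof (rule that)
    show "B 0 = C" using B(1)[of 0] by simp
    show "openin X (B n)" "closedin X (B n)" "p \<in> B n" for n
      using B(1)[of n] by (simp_all add: clopen_at_def)
    show "B (Suc n) \<subset> B n" for n by (rule B(2))
    show base: "\<exists>n. B n \<subseteq> U" if U: "openin X U" "p \<in> U" for U
    proof -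
      obtain n where "p \<in> b n" "b n \<subseteq> U" using \<B>(3)[OF U] b_onto by blast
      then show ?thesis using B(3) by blast
    qed
    show "(\<Inter>n. B n) = {p}"
      by (rule t1_space_Inter_local_base[OF assms(3) \<open>p \<in> topspace X\<close>])
        (use B(1) base in \<open>auto simp: clopen_at_def\<close>)
  qed
qed

subsection \<open>Strongly homogeneous spaces\<close>

lemma strongly_homogeneousD:
  assumes "strongly_homogeneous X"
    and "openin X A" "closedin X A" "A \<noteq> {}" "openin X B" "closedin X B" "B \<noteq> {}"
  shows "subtopology X A homeomorphic_space subtopology X B"
  using assms unfolding strongly_homogeneous_def by blast

lemma strongly_homogeneous_isolated_point:
  assumes X: "strongly_homogeneous X" and z: "openin X {z}"
  shows "topspace X = {z}"
proof -
  have zX: "z \<in> topspace X" using openin_subset[OF z] by blast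
  have "closedin X {z}"
    using X zX by (simp add: strongly_homogeneous_def Hausdorff_imp_t1_space closedin_t1_singleton)
  moreover have "topspace X \<noteq> {}" using zX by blast
  ultimately have "subtopology X {z} homeomorphic_space subtopology X (topspace X)"
    using strongly_homogeneousD[OF X z _ insert_not_empty openin_topspace closedin_topspace] by simp
  then obtain f g where "homeomorphic_maps (subtopology X {z}) X f g"
    unfolding homeomorphic_space_def by auto
  then have g: "continuous_map X (subtopology X {z}) g"
    and fg: "\<And>y. y \<in> topspace X \<Longrightarrow> f (g y) = y"
    by (simp_all add: homeomorphic_maps_def)
  have "g ` topspace X \<subseteq> {z}"
    using continuous_map_image_subset_topspace[OF g] by simp
  then have y: "y = f z" if "y \<in> topspace X" for y
    using fg[OF that] that by auto
  show ?thesis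
  proof
    show "topspace X \<subseteq> {z}" using y y[OF zX] by auto
  qed (use zX in simp)
qed

lemma strongly_homogeneous_shells_homeomorphic:
  assumes X: "strongly_homogeneous X"
    and C: "\<And>n. openin X (C n)" "\<And>n. closedin X (C n)" "\<And>n. C (Suc n) \<subset> C n"
    and D: "\<And>n. openin X (D n)" "\<And>n. closedin X (D n)" "\<And>n. D (Suc n) \<subset> D n"
  obtains h k where "\<And>n. homeomorphic_maps (subtopology X (C n - C (Suc n)))
    (subtopology X (D n - D (Suc n))) (h n) (k n)"
proof -
  have "subtopology X (C n - C (Suc n)) homeomorphic_space subtopology X (D n - D (Suc n))" for n
  proof (rule strongly_homogeneousD[OF X])
    show "openin X (C n - C (Suc n))" "closedin X (C n - C (Suc n))"
      "openin X (D n - D (Suc n))" "closedin X (D n - D (Suc n))"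
      using C(1,2) D(1,2) by (simp_all add: openin_diff closedin_diff)
    show "C n - C (Suc n) \<noteq> {}" "D n - D (Suc n) \<noteq> {}"
      using C(3)[of n] D(3)[of n] by blast+
  qed
  then show thesis
    using that unfolding homeomorphic_space_def by metis
qed

lemma homeomorphic_maps_glue_shells:
  assumes t1: "t1_space X"
    and C: "\<And>n. openin X (C n)" "\<And>n. closedin X (C n)" "decseq C" "(\<Inter>n. C n) = {p}"
    and D: "\<And>n. openin X (D n)" "\<And>n. closedin X (D n)" "decseq D" "(\<Inter>n. D n) = {q}"
    and hk: "\<And>n. homeomorphic_maps (subtopology X (C n - C (Suc n)))
      (subtopology X (D n - D (Suc n))) (h n) (k n)"
  obtains g g'
  where "homeomorphic_maps (subtopology X (C 0 - {p})) (subtopology X (D 0 - {q})) g g'"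
    "\<And>n. g ` (C n - {p}) \<subseteq> D n" "\<And>n. g' ` (D n - {q}) \<subseteq> C n"
proof -
  have CX: "topspace X \<inter> (C n - C (Suc n)) = C n - C (Suc n)"
    and DX: "topspace X \<inter> (D n - D (Suc n)) = D n - D (Suc n)" for n
    using openin_subset[OF C(1)[of n]] openin_subset[OF D(1)[of n]] by blast+
  have h_shell: "h n ` (C n - C (Suc n)) = D n - D (Suc n)"
    and k_shell: "k n ` (D n - D (Suc n)) = C n - C (Suc n)" for n
    using hk[of n] homeomorphic_maps_sym[of _ _ "h n" "k n"] CX[of n] DX[of n]
    by (metis homeomorphic_imp_surjective_map homeomorphic_maps_imp_map topspace_subtopology)+
  have C0: "openin X (C 0 - {p})" and D0: "openin X (D 0 - {q})"
    using C(1) D(1) t1 by (simp_all add: t1_space_openin_delete_alt)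
  have C_shell_sub: "C n - C (Suc n) \<subseteq> C 0 - {p}"
    and D_shell_sub: "D n - D (Suc n) \<subseteq> D 0 - {q}" for n
    using C(4) D(4) decseqD[OF C(3), of 0 n] decseqD[OF D(3), of 0 n] by blast+
  have pieces: "homeomorphic_maps
      (subtopology (subtopology X (C 0 - {p})) (C n - C (Suc n)))
      (subtopology (subtopology X (D 0 - {q})) (D n - D (Suc n))) (h n) (k n)" for n
    using hk[of n] C_shell_sub[of n] D_shell_sub[of n]
    by (simp add: subtopology_subtopology Int_absorb1)
  obtain g g'
    where gg: "homeomorphic_maps (subtopology X (C 0 - {p})) (subtopology X (D 0 - {q})) g g'"
    and g: "\<And>n x. n \<in> UNIV \<Longrightarrow> x \<in> C n - C (Suc n) \<Longrightarrow> g x = h n x"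
    and g': "\<And>n y. n \<in> UNIV \<Longrightarrow> y \<in> D n - D (Suc n) \<Longrightarrow> g' y = k n y"
  proof (rule homeomorphic_maps_pasting[OF _ _ decseq_shells_disjoint[OF C(3)]
        decseq_shells_disjoint[OF D(3)] _ _ pieces])
    show "openin (subtopology X (C 0 - {p})) (C n - C (Suc n))"
      "openin (subtopology X (D 0 - {q})) (D n - D (Suc n))" for n
      using C(1,2) D(1,2) C_shell_sub D_shell_sub by (auto simp: openin_open_subtopology C0 D0)
    show "topspace (subtopology X (C 0 - {p})) = (\<Union>n\<in>UNIV. C n - C (Suc n))"
      using decseq_shells_Union[OF C(3,4)] C0 by (auto dest: openin_subset)
    show "topspace (subtopology X (D 0 - {q})) = (\<Union>n\<in>UNIV. D n - D (Suc n))"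
      using decseq_shells_Union[OF D(3,4)] D0 by (auto dest: openin_subset)
  qed (rule that)
  have g_shell: "g x \<in> D m" if "x \<in> C m - C (Suc m)" for m x
    using g[OF UNIV_I that] h_shell[of m] that by blast
  have g'_shell: "g' y \<in> C m" if "y \<in> D m - D (Suc m)" for m y
    using g'[OF UNIV_I that] k_shell[of m] that by blast
  show thesis
  proof (rule that[OF gg])
    show "g ` (C n - {p}) \<subseteq> D n" for n
      by (rule decseq_shell_preserving_image[OF C(3) D(3) g_shell C(4)])
    show "g' ` (D n - {q}) \<subseteq> C n" for n
      by (rule decseq_shell_preserving_image[OF D(3) C(3) g'_shell D(4)])
  qed
qed

lemma strongly_homogeneous_pointed_homeomorphic_maps:
  assumes X: "strongly_homogeneous X" "first_countable X" "ind_zero X"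
      "X derived_set_of topspace X = topspace X"
    and C: "openin X C" "closedin X C" "p \<in> C" and D: "openin X D" "closedin X D" "q \<in> D"
  obtains h k where "homeomorphic_maps (subtopology X C) (subtopology X D) h k" "h p = q"
proof -
  have t1: "t1_space X"
    using X(1) by (simp add: strongly_homogeneous_def Hausdorff_imp_t1_space)
  have pX: "p \<in> X derived_set_of topspace X" and qX: "q \<in> X derived_set_of topspace X"
    using C D X(4) openin_subset by blast+
  obtain Cs where Cs: "Cs 0 = C" "\<And>n. openin X (Cs n)" "\<And>n. closedin X (Cs n)" "\<And>n. p \<in> Cs n"
      "\<And>n. Cs (Suc n) \<subset> Cs n" "\<And>U. openin X U \<Longrightarrow> p \<in> U \<Longrightarrow> \<exists>n. Cs n \<subseteq> U" "(\<Inter>n. Cs n) = {p}"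
    by (rule clopen_strictly_decreasing_local_base[OF X(2,3) t1 pX C]) (rule that)
  obtain Ds where Ds: "Ds 0 = D" "\<And>n. openin X (Ds n)" "\<And>n. closedin X (Ds n)" "\<And>n. q \<in> Ds n"
      "\<And>n. Ds (Suc n) \<subset> Ds n" "\<And>U. openin X U \<Longrightarrow> q \<in> U \<Longrightarrow> \<exists>n. Ds n \<subseteq> U" "(\<Inter>n. Ds n) = {q}"
    by (rule clopen_strictly_decreasing_local_base[OF X(2,3) t1 qX D]) (rule that)
  have "decseq Cs" "decseq Ds"
    by (simp_all add: decseq_SucI Cs(5) Ds(5) less_imp_le)
  obtain h k where hk: "\<And>n. homeomorphic_maps (subtopology X (Cs n - Cs (Suc n)))
      (subtopology X (Ds n - Ds (Suc n))) (h n) (k n)"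
    by (rule strongly_homogeneous_shells_homeomorphic[where C=Cs and D=Ds,
          OF X(1) Cs(2,3,5) Ds(2,3,5)])
      (rule that)
  obtain g g'
    where gg: "homeomorphic_maps (subtopology X (Cs 0 - {p})) (subtopology X (Ds 0 - {q})) g g'"
    and g: "\<And>n. g ` (Cs n - {p}) \<subseteq> Ds n" and g': "\<And>n. g' ` (Ds n - {q}) \<subseteq> Cs n"
    by (rule homeomorphic_maps_glue_shells[where C=Cs and D=Ds, OF t1 Cs(2,3) \<open>decseq Cs\<close> Cs(7)
        Ds(2,3) \<open>decseq Ds\<close> Ds(7) hk]) (rule that)
  note gg = gg[unfolded Cs(1) Ds(1)]
  have "homeomorphic_maps (subtopology X C) (subtopology X D)
      (\<lambda>x. if x = p then q else g x) (\<lambda>y. if y = q then p else g' y)"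
  proof (rule homeomorphic_maps_extend_point[OF gg C(1) _ C(3) D(1) _ D(3)])
    show "closedin X {p}" "closedin X {q}"
      using t1 C(3) D(3) openin_subset[OF C(1)] openin_subset[OF D(1)]
      by (auto intro: closedin_t1_singleton)
    show "\<exists>U. openin X U \<and> p \<in> U \<and> g ` (C \<inter> U - {p}) \<subseteq> V" if V: "openin X V" "q \<in> V" for V
    proof -
      obtain n where "Ds n \<subseteq> V" using Ds(6)[OF V] by blast
      then have "g ` (C \<inter> Cs n - {p}) \<subseteq> V" using g[of n] by blast
      then show ?thesis using Cs(2,4) by (intro exI[of _ "Cs n"]) simp
    qed
    show "\<exists>V. openin X V \<and> q \<in> V \<and> g' ` (D \<inter> V - {q}) \<subseteq> U" if U: "openin X U" "p \<in> U" for U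
    proof -
      obtain n where "Cs n \<subseteq> U" using Cs(6)[OF U] by blast
      then have "g' ` (D \<inter> Ds n - {q}) \<subseteq> U" using g'[of n] by blast
      then show ?thesis using Ds(2,4) by (intro exI[of _ "Ds n"]) simp
    qed
  qed
  then show thesis by (rule that) simp
qed

subsection \<open>Discrete families and collectionwise normality\<close>

lemma discrete_familyD:
  assumes "discrete_family X S F" "x \<in> topspace X"
  obtains U where "openin X U" "x \<in> U"
    "\<And>s t. s \<in> S \<Longrightarrow> t \<in> S \<Longrightarrow> F s \<inter> U \<noteq> {} \<Longrightarrow> F t \<inter> U \<noteq> {} \<Longrightarrow> s = t"
  using assms unfolding discrete_family_def by meson

lemma discrete_subsetD:
  assumes "discrete_subset X D" "x \<in> topspace X"
  obtains U where "openin X U" "x \<in> U" "\<And>a b. a \<in> D \<inter> U \<Longrightarrow> b \<in> D \<inter> U \<Longrightarrow> a = b"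
  using assms unfolding discrete_subset_def by meson

lemma discrete_subset_iff_derived_set_of:
  assumes "t1_space X"
  shows "discrete_subset X D \<longleftrightarrow> D \<subseteq> topspace X \<and> X derived_set_of D = {}"
proof (intro iffI conjI)
  assume D: "discrete_subset X D"
  then show "D \<subseteq> topspace X" by (simp add: discrete_subset_def)
  show "X derived_set_of D = {}"
  proof (rule equals0I)
    fix x assume "x \<in> X derived_set_of D"
    then have x: "x \<in> topspace X" and acc: "\<And>T. x \<in> T \<Longrightarrow> openin X T \<Longrightarrow> \<exists>y. y \<noteq> x \<and> y \<in> D \<and> y \<in> T"
      by (simp_all add: in_derived_set_of)
    obtain U where U: "openin X U" "x \<in> U" "\<And>a b. a \<in> D \<inter> U \<Longrightarrow> b \<in> D \<inter> U \<Longrightarrow> a = b"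
      by (rule discrete_subsetD[OF D x]) (rule that)
    obtain y where y: "y \<noteq> x" "y \<in> D" "y \<in> U"
      using acc[OF U(2,1)] by blast
    have "openin X (U - {y})"
      using assms U(1) by (simp add: t1_space_openin_delete_alt)
    moreover have "x \<in> U - {y}"
      using U(2) y(1) by blast
    ultimately obtain z where z: "z \<in> D" "z \<in> U - {y}"
      using acc by (metis (no_types))
    then show False using U(3)[of z y] y by blast
  qed
next
  assume D: "D \<subseteq> topspace X \<and> X derived_set_of D = {}"
  show "discrete_subset X D"
    unfolding discrete_subset_def
  proof (intro conjI ballI)
    fix x assume x: "x \<in> topspace X"
    have "x \<notin> X derived_set_of D" using D by blast
    then have "\<exists>U. x \<in> U \<and> openin X U \<and> \<not> (\<exists>y. y \<noteq> x \<and> y \<in> D \<and> y \<in> U)"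
      using x unfolding in_derived_set_of by blast
    then obtain U where "openin X U" "x \<in> U" "\<And>y. y \<in> D \<Longrightarrow> y \<in> U \<Longrightarrow> y = x"
      by blast
    then show "\<exists>U. openin X U \<and> x \<in> U \<and> (\<forall>a\<in>D \<inter> U. \<forall>b\<in>D \<inter> U. a = b)"
      by blast
  qed (use D in blast)
qed

lemma discrete_subset_Un:
  assumes "t1_space X" "discrete_subset X A" "discrete_subset X B"
  shows "discrete_subset X (A \<union> B)"
  using assms by (simp add: discrete_subset_iff_derived_set_of derived_set_of_Un)

lemma discrete_family_subfamily:
  assumes "discrete_family X S F" "T \<subseteq> S" "\<And>s. s \<in> T \<Longrightarrow> G s \<subseteq> F s"
  shows "discrete_family X T G"
  unfolding discrete_family_def
proof
  fix x assume "x \<in> topspace X"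
  then obtain U where U: "openin X U" "x \<in> U"
    and one: "\<And>s t. s \<in> S \<Longrightarrow> t \<in> S \<Longrightarrow> F s \<inter> U \<noteq> {} \<Longrightarrow> F t \<inter> U \<noteq> {} \<Longrightarrow> s = t"
    by (rule discrete_familyD[OF assms(1)]) (rule that)
  have "s = t" if "s \<in> T" "t \<in> T" "G s \<inter> U \<noteq> {}" "G t \<inter> U \<noteq> {}" for s t
  proof -
    have "F s \<inter> U \<noteq> {}" "F t \<inter> U \<noteq> {}" using that assms(3) by blast+
    then show ?thesis using one that(1,2) assms(2) by blast
  qed
  with U show "\<exists>U. openin X U \<and> x \<in> U \<and> (\<forall>s\<in>T. \<forall>t\<in>T. G s \<inter> U \<noteq> {} \<and> G t \<inter> U \<noteq> {} \<longrightarrow> s = t)"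
    by blast
qed

lemma discrete_family_disjoint:
  assumes "discrete_family X S F" "\<And>s. s \<in> S \<Longrightarrow> F s \<subseteq> topspace X"
  shows "disjoint_family_on F S"
  unfolding disjoint_family_on_def
proof (intro ballI impI equals0I)
  fix s t x assume st: "s \<in> S" "t \<in> S" "s \<noteq> t" and x: "x \<in> F s \<inter> F t"
  then have "x \<in> topspace X" using assms(2) by blast
  then obtain U where "x \<in> U"
    and one: "\<And>s t. s \<in> S \<Longrightarrow> t \<in> S \<Longrightarrow> F s \<inter> U \<noteq> {} \<Longrightarrow> F t \<inter> U \<noteq> {} \<Longrightarrow> s = t"
    by (rule discrete_familyD[OF assms(1)]) (rule that)
  then have "s = t" using one[OF st(1,2)] x by blast
  with st(3) show False by simp
qed

lemma closedin_Union_discrete_family: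
  assumes "discrete_family X S F" "\<And>s. s \<in> S \<Longrightarrow> closedin X (F s)"
  shows "closedin X (\<Union>s\<in>S. F s)"
proof (rule closedin_locally_finite_Union)
  show "locally_finite_in X (F ` S)"
    unfolding locally_finite_in_def
  proof (intro conjI ballI)
    show "\<Union> (F ` S) \<subseteq> topspace X" using assms(2) closedin_subset by blast
    fix x assume "x \<in> topspace X"
    then obtain U where U: "openin X U" "x \<in> U"
      and one: "\<And>s t. s \<in> S \<Longrightarrow> t \<in> S \<Longrightarrow> F s \<inter> U \<noteq> {} \<Longrightarrow> F t \<inter> U \<noteq> {} \<Longrightarrow> s = t"
      by (rule discrete_familyD[OF assms(1)]) (rule that)
    have "finite {s \<in> S. F s \<inter> U \<noteq> {}}"
    proof (cases "{s \<in> S. F s \<inter> U \<noteq> {}} = {}")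
      case False
      then obtain s0 where "s0 \<in> S" "F s0 \<inter> U \<noteq> {}" by blast
      then have "{s \<in> S. F s \<inter> U \<noteq> {}} \<subseteq> {s0}" using one by blast
      then show ?thesis using finite_subset by blast
    qed (metis finite.emptyI)
    moreover have "{V \<in> F ` S. V \<inter> U \<noteq> {}} = F ` {s \<in> S. F s \<inter> U \<noteq> {}}" by blast
    ultimately have "finite {V \<in> F ` S. V \<inter> U \<noteq> {}}" by simp
    then show "\<exists>V. openin X V \<and> x \<in> V \<and> finite {W \<in> F ` S. W \<inter> V \<noteq> {}}" using U by blast
  qed
qed (use assms(2) in blast)

lemma collectionwise_normalD:
  fixes S :: "'a set set" and F :: "'a set \<Rightarrow> 'a set"
  assumes "collectionwise_normal X" "\<And>s. s \<in> S \<Longrightarrow> closedin X (F s)" "discrete_family X S F"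
  obtains V where "\<And>s. s \<in> S \<Longrightarrow> openin X (V s)" "\<And>s. s \<in> S \<Longrightarrow> F s \<subseteq> V s"
    "discrete_family X S V"
proof -
  have "(\<forall>s\<in>S. closedin X (F s)) \<and> discrete_family X S F \<longrightarrow>
      (\<exists>V. (\<forall>s\<in>S. openin X (V s) \<and> F s \<subseteq> V s) \<and> discrete_family X S V)"
    using assms(1) unfolding collectionwise_normal_def by blast
  then show thesis using assms(2,3) that by blast
qed

lemma collectionwise_normal_discrete_subset:
  assumes X: "collectionwise_normal X" and D: "discrete_subset X D"
  obtains W where "\<And>x. x \<in> D \<Longrightarrow> openin X (W x)" "\<And>x. x \<in> D \<Longrightarrow> x \<in> W x"
    "discrete_family X D W"
proof -
  let ?S = "(\<lambda>x. {x}) ` D"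
  have "t1_space X" and DX: "D \<subseteq> topspace X"
    using X D by (simp_all add: collectionwise_normal_def discrete_subset_def)
  then have closed: "\<And>s. s \<in> ?S \<Longrightarrow> closedin X s"
    by (auto intro: closedin_t1_singleton)
  have disc: "discrete_family X ?S (\<lambda>s. s)"
    unfolding discrete_family_def
  proof
    fix x assume "x \<in> topspace X"
    then obtain U where U: "openin X U" "x \<in> U" "\<And>a b. a \<in> D \<inter> U \<Longrightarrow> b \<in> D \<inter> U \<Longrightarrow> a = b"
      by (rule discrete_subsetD[OF D]) (rule that)
    have "\<forall>s\<in>?S. \<forall>t\<in>?S. s \<inter> U \<noteq> {} \<and> t \<inter> U \<noteq> {} \<longrightarrow> s = t"
    proof (intro ballI impI)
      fix s t assume "s \<in> ?S" "t \<in> ?S" "s \<inter> U \<noteq> {} \<and> t \<inter> U \<noteq> {}"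
      then obtain a b where "s = {a}" "t = {b}" "a \<in> D \<inter> U" "b \<in> D \<inter> U" by blast
      then show "s = t" using U(3)[of a b] by simp
    qed
    with U(1,2) show "\<exists>U. openin X U \<and> x \<in> U \<and> (\<forall>s\<in>?S. \<forall>t\<in>?S. s \<inter> U \<noteq> {} \<and> t \<inter> U \<noteq> {} \<longrightarrow> s = t)"
      by blast
  qed
  obtain V where V: "\<And>s. s \<in> ?S \<Longrightarrow> openin X (V s)" "\<And>s. s \<in> ?S \<Longrightarrow> s \<subseteq> V s"
    "discrete_family X ?S V"
    by (rule collectionwise_normalD[where F="\<lambda>s. s", OF X closed disc]) (assumption | rule that)+
  show thesis
  proof (rule that[of "\<lambda>x. V {x}"])
    show "openin X (V {x})" "x \<in> V {x}" if "x \<in> D" for x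
      using V(1,2)[of "{x}"] that by blast+
    show "discrete_family X D (\<lambda>x. V {x})"
      unfolding discrete_family_def
    proof
      fix x assume "x \<in> topspace X"
      then obtain U where U: "openin X U" "x \<in> U"
        and one: "\<And>s t. s \<in> ?S \<Longrightarrow> t \<in> ?S \<Longrightarrow> V s \<inter> U \<noteq> {} \<Longrightarrow> V t \<inter> U \<noteq> {} \<Longrightarrow> s = t"
        by (rule discrete_familyD[OF V(3)]) (rule that)
      have "\<forall>a\<in>D. \<forall>b\<in>D. V {a} \<inter> U \<noteq> {} \<and> V {b} \<inter> U \<noteq> {} \<longrightarrow> a = b"
        using one by blast
      with U show "\<exists>U. openin X U \<and> x \<in> U \<and> (\<forall>a\<in>D. \<forall>b\<in>D. V {a} \<inter> U \<noteq> {} \<and> V {b} \<inter> U \<noteq> {} \<longrightarrow> a = b)"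
        by blast
    qed
  qed
qed

lemma discrete_subset_clopen_nbhds:
  assumes X: "collectionwise_normal X" "ind_zero X" "X derived_set_of topspace X = topspace X"
    and D: "discrete_subset X D"
  obtains K where "\<And>x. x \<in> D \<Longrightarrow> openin X (K x)" "\<And>x. x \<in> D \<Longrightarrow> closedin X (K x)"
    "\<And>x. x \<in> D \<Longrightarrow> x \<in> K x" "discrete_family X D K" "topspace X - (\<Union>x\<in>D. K x) \<noteq> {}"
proof -
  have t1: "t1_space X" using X(1) by (simp add: collectionwise_normal_def)
  have DX: "D \<subseteq> topspace X" using D by (simp add: discrete_subset_def)
  obtain W where W: "\<And>x. x \<in> D \<Longrightarrow> openin X (W x)" "\<And>x. x \<in> D \<Longrightarrow> x \<in> W x"
    "discrete_family X D W"
    by (rule collectionwise_normal_discrete_subset[OF X(1) D]) (rule that)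
  have "\<forall>x\<in>D. \<exists>K. openin X K \<and> closedin X K \<and> x \<in> K \<and> K \<subset> W x"
  proof
    fix x assume x: "x \<in> D"
    then have "x \<in> X derived_set_of topspace X" using X(3) DX by blast
    then obtain K where "openin X K" "closedin X K" "x \<in> K" "K \<subset> W x"
      by (rule ind_zero_proper_clopen_nbhd[OF X(2) t1 _ W(1)[OF x] W(2)[OF x]]) (rule that)
    then show "\<exists>K. openin X K \<and> closedin X K \<and> x \<in> K \<and> K \<subset> W x" by blast
  qed
  then obtain K where K: "\<forall>x\<in>D. openin X (K x) \<and> closedin X (K x) \<and> x \<in> K x \<and> K x \<subset> W x"
    by (rule bchoice[THEN exE])
  have W_disjoint: "disjoint_family_on W D"
    by (rule discrete_family_disjoint[OF W(3)]) (simp add: W(1) openin_subset)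
  show thesis
  proof (rule that)
    show "openin X (K x)" "closedin X (K x)" "x \<in> K x" if "x \<in> D" for x
      using K that by blast+
    show "discrete_family X D K"
      by (rule discrete_family_subfamily[OF W(3) order_refl]) (use K in blast)
    show "topspace X - (\<Union>x\<in>D. K x) \<noteq> {}"
    proof (cases "D = {}")
      case True
      then show ?thesis using X(2) by (simp add: ind_zero_def)
    next
      case False
      then obtain x0 where x0: "x0 \<in> D" by blast
      \<comment> \<open>a point of \<open>W x0 - K x0\<close> avoids every \<open>K x\<close>, as the \<open>W x\<close> are pairwise disjoint\<close>
      then obtain y where y: "y \<in> W x0" "y \<notin> K x0" using K by blast
      have "y \<notin> K x" if "x \<in> D" for x
      proof (cases "x = x0")
        case False
        then have "W x \<inter> W x0 = {}" using W_disjoint that x0 by (simp add: disjoint_family_onD)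
        then show ?thesis using K that y(1) by blast
      qed (use y in simp)
      moreover have "y \<in> topspace X" using W(1)[OF x0] y(1) openin_subset by blast
      ultimately show ?thesis by blast
    qed
  qed
qed

subsection \<open>Extending bijections between discrete sets\<close>

lemma homeomorphic_maps_Union_clopen_family:
  assumes X: "strongly_homogeneous X" "first_countable X" "ind_zero X"
      "X derived_set_of topspace X = topspace X"
    and K: "\<And>x. x \<in> P \<Longrightarrow> openin X (K x)" "\<And>x. x \<in> P \<Longrightarrow> closedin X (K x)"
      "\<And>x. x \<in> P \<Longrightarrow> x \<in> K x" "disjoint_family_on K P"
    and f: "A \<subseteq> P" "B \<subseteq> P" "bij_betw f A B"
  obtains h k where "homeomorphic_maps (subtopology X (\<Union>a\<in>A. K a)) (subtopology X (\<Union>b\<in>B. K b)) h k"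
    "\<And>a. a \<in> A \<Longrightarrow> h a = f a"
proof -
  have fA: "f a \<in> P" if "a \<in> A" for a
    using f that by (auto dest: bij_betwE)
  have "\<exists>h k. homeomorphic_maps (subtopology X (K a)) (subtopology X (K (f a))) h k \<and> h a = f a"
    if a: "a \<in> A" for a
    using strongly_homogeneous_pointed_homeomorphic_maps[OF X K(1-3)[OF subsetD[OF f(1) a]]
        K(1-3)[OF fA[OF a]]] by metis
  then obtain hh kk
    where hk: "\<And>a. a \<in> A \<Longrightarrow> homeomorphic_maps (subtopology X (K a)) (subtopology X (K (f a)))
        (hh a) (kk a)"
      and hh: "\<And>a. a \<in> A \<Longrightarrow> hh a a = f a"
    by metis
  define UA where "UA = (\<Union>a\<in>A. K a)"
  define UB where "UB = (\<Union>b\<in>B. K b)"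
  have UB_eq: "UB = (\<Union>a\<in>A. K (f a))"
    using f(3) by (auto simp: UB_def bij_betw_def)
  have UA: "openin X UA" and UB: "openin X UB"
    using K(1) f(1,2) by (auto simp: UA_def UB_def intro!: openin_Union)
  obtain h k where hk': "homeomorphic_maps (subtopology X UA) (subtopology X UB) h k"
    and h: "\<And>a x. a \<in> A \<Longrightarrow> x \<in> K a \<Longrightarrow> h x = hh a x"
    and "\<And>a y. a \<in> A \<Longrightarrow> y \<in> K (f a) \<Longrightarrow> k y = kk a y"
  proof (rule homeomorphic_maps_pasting[where I=A and S=K and T="\<lambda>a. K (f a)"])
    show "openin (subtopology X UA) (K a)" if "a \<in> A" for a
      using K(1) f(1) that UA by (auto simp: openin_open_subtopology UA_def)
    show "openin (subtopology X UB) (K (f a))" if "a \<in> A" for a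
      using K(1) fA that UB by (auto simp: openin_open_subtopology UB_eq)
    show "disjoint_family_on K A"
      using K(4) f(1) by (rule disjoint_family_on_mono[rotated])
    show "disjoint_family_on (\<lambda>a. K (f a)) A"
      using K(4) f(3) fA unfolding disjoint_family_on_def bij_betw_def inj_on_def by metis
    show "topspace (subtopology X UA) = (\<Union>a\<in>A. K a)"
      using UA openin_subset by (auto simp: UA_def)
    show "topspace (subtopology X UB) = (\<Union>a\<in>A. K (f a))"
      using UB openin_subset by (auto simp: UB_eq)
    show "homeomorphic_maps (subtopology (subtopology X UA) (K a))
        (subtopology (subtopology X UB) (K (f a))) (hh a) (kk a)" if "a \<in> A" for a
    proof -
      have "UA \<inter> K a = K a" "UB \<inter> K (f a) = K (f a)"
        using that by (auto simp: UA_def UB_eq)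
      then show ?thesis using hk that by (simp add: subtopology_subtopology)
    qed
  qed (rule that)
  show thesis
  proof (rule that[OF hk'[unfolded UA_def UB_def]])
    show "h a = f a" if "a \<in> A" for a
      using h[OF that K(3)] hh that f(1) by auto
  qed
qed

lemma strongly_homogeneous_extend_bijection_clopen_nbhds:
  assumes X: "strongly_homogeneous X" "first_countable X" "ind_zero X"
      "X derived_set_of topspace X = topspace X"
    and K: "\<And>x. x \<in> P \<Longrightarrow> openin X (K x)" "\<And>x. x \<in> P \<Longrightarrow> closedin X (K x)"
      "\<And>x. x \<in> P \<Longrightarrow> x \<in> K x" "discrete_family X P K" "topspace X - (\<Union>x\<in>P. K x) \<noteq> {}"
    and f: "A \<subseteq> P" "B \<subseteq> P" "bij_betw f A B"
  obtains h where "homeomorphic_map X X h" "\<And>a. a \<in> A \<Longrightarrow> h a = f a"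
proof -
  let ?UA = "\<Union>a\<in>A. K a" and ?UB = "\<Union>b\<in>B. K b"
  have clopen: "openin X (\<Union>x\<in>Q. K x)" "closedin X (\<Union>x\<in>Q. K x)" if "Q \<subseteq> P" for Q
  proof -
    show "openin X (\<Union>x\<in>Q. K x)" using K(1) that by (auto intro!: openin_Union)
    have "discrete_family X Q K"
      by (rule discrete_family_subfamily[OF K(4) that]) simp
    then show "closedin X (\<Union>x\<in>Q. K x)"
      by (rule closedin_Union_discrete_family) (use K(2) that in blast)
  qed
  have disjoint: "disjoint_family_on K P"
    by (rule discrete_family_disjoint[OF K(4)]) (simp add: K(1) openin_subset)
  obtain h k where hk: "homeomorphic_maps (subtopology X ?UA) (subtopology X ?UB) h k"
    and h: "\<And>a. a \<in> A \<Longrightarrow> h a = f a"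
    by (rule homeomorphic_maps_Union_clopen_family[OF X K(1-3) disjoint f])
      (assumption | rule that)+
  have complement: "openin X (topspace X - (\<Union>x\<in>Q. K x))" "closedin X (topspace X - (\<Union>x\<in>Q. K x))"
    "topspace X - (\<Union>x\<in>Q. K x) \<noteq> {}" if "Q \<subseteq> P" for Q
    using clopen[OF that] K(5) that by (auto intro: openin_diff closedin_diff) blast
  have "subtopology X (topspace X - ?UA) homeomorphic_space subtopology X (topspace X - ?UB)"
    by (rule strongly_homogeneousD[OF X(1) complement[OF f(1)] complement[OF f(2)]])
  then obtain g g' where gg: "homeomorphic_maps (subtopology X (topspace X - ?UA))
      (subtopology X (topspace X - ?UB)) g g'"
    unfolding homeomorphic_space_def by blast
  obtain H H' where HH: "homeomorphic_maps X X H H'" and H: "\<And>x. x \<in> ?UA \<Longrightarrow> H x = h x"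
  proof (rule homeomorphic_maps_pasting[where I=UNIV and S="\<lambda>b. if b then ?UA else topspace X - ?UA"
        and T="\<lambda>b. if b then ?UB else topspace X - ?UB" and f="\<lambda>b. if b then h else g"
        and g="\<lambda>b. if b then k else g'"])
    show "openin X (if b then ?UA else topspace X - ?UA)"
      "openin X (if b then ?UB else topspace X - ?UB)" for b
      using clopen[OF f(1)] clopen[OF f(2)] by (auto simp: openin_diff)
    show "disjoint_family_on (\<lambda>b. if b then ?UA else topspace X - ?UA) UNIV"
      "disjoint_family_on (\<lambda>b. if b then ?UB else topspace X - ?UB) UNIV"
      by (auto simp: disjoint_family_on_def)
    show "topspace X = (\<Union>b\<in>UNIV. if b then ?UA else topspace X - ?UA)"
      "topspace X = (\<Union>b\<in>UNIV. if b then ?UB else topspace X - ?UB)"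
      using clopen[OF f(1)] clopen[OF f(2)] by (auto simp: dest: openin_subset)
    show "homeomorphic_maps (subtopology X (if b then ?UA else topspace X - ?UA))
        (subtopology X (if b then ?UB else topspace X - ?UB))
        (if b then h else g) (if b then k else g')" for b
      using hk gg by simp
  qed (metis UNIV_I)
  show thesis
  proof (rule that)
    show "homeomorphic_map X X H" using HH by (rule homeomorphic_maps_imp_map)
    show "H a = f a" if a: "a \<in> A" for a
    proof -
      have "a \<in> ?UA" using K(3) f(1) a by blast
      then show ?thesis using H h[OF a] by simp
    qed
  qed
qed

lemma perfect_extend_discrete_bijection:
  assumes X: "collectionwise_normal X" "first_countable X" "strongly_homogeneous X" "ind_zero X"
      "X derived_set_of topspace X = topspace X"
    and A: "discrete_subset X A" and B: "discrete_subset X B" and f: "bij_betw f A B"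
  obtains h where "homeomorphic_map X X h" "\<And>a. a \<in> A \<Longrightarrow> h a = f a"
proof -
  have "t1_space X" using X(1) by (simp add: collectionwise_normal_def)
  then have "discrete_subset X (A \<union> B)" by (rule discrete_subset_Un[OF _ A B])
  then obtain K where K: "\<And>x. x \<in> A \<union> B \<Longrightarrow> openin X (K x)" "\<And>x. x \<in> A \<union> B \<Longrightarrow> closedin X (K x)"
    "\<And>x. x \<in> A \<union> B \<Longrightarrow> x \<in> K x" "discrete_family X (A \<union> B) K"
    "topspace X - (\<Union>x\<in>A \<union> B. K x) \<noteq> {}"
    by (rule discrete_subset_clopen_nbhds[OF X(1,4,5)]) (rule that)
  show thesis
    by (rule strongly_homogeneous_extend_bijection_clopen_nbhds[OF X(3,2,4,5) K
          Un_upper1 Un_upper2 f])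
      (assumption | rule that)+
qed

theorem mainTheorem6:
  fixes X :: "'a topology"
  assumes "collectionwise_normal X"
    and "first_countable X"
    and "strongly_homogeneous X"
    and "ind_zero X"
  shows "strongly_discrete_homogeneous X"
proof -
  have "\<exists>h. homeomorphic_map X X h \<and> (\<forall>a\<in>A. h a = f a)"
    if A: "discrete_subset X A" and B: "discrete_subset X B" and f: "bij_betw f A B" for A B f
  proof (cases "\<exists>z. topspace X \<subseteq> {z}")
    case True
    then obtain z where z: "topspace X \<subseteq> {z}" by blast
    have "a = z" "f a = z" if "a \<in> A" for a
      using that z A B bij_betwE[OF f] by (auto simp: discrete_subset_def)
    then show ?thesis by (intro exI[of _ id]) simp
  next
    case False
    then have "X derived_set_of topspace X = topspace X"
      using strongly_homogeneous_isolated_point[OF assms(3)] by (auto simp: derived_set_of_topspace)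
    then show ?thesis
      using perfect_extend_discrete_bijection[OF assms _ A B f] by metis
  qed
  moreover have "Hausdorff_space X" using assms(3) by (simp add: strongly_homogeneous_def)
  ultimately show ?thesis unfolding strongly_discrete_homogeneous_def by blast
qed

end
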